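(* Let $\{\alpha_n\}_{n\ge0}$ be a sequence of positive reals and define $\gamma_0=1$, $\gamma_n=1+\sum_{i=0}^{n-1}\alpha_i$ for $n\ge1$. Suppose $\lim_{n\to\infty}\alpha_n=0$, $\limsup_{n\to\infty}|\alpha_{n+1}^{-1}-\alpha_n^{-1}|<\infty$, $\sum_{n=0}^\infty\alpha_n=\infty$, and there exists $r\in(1,\infty)$ with $\sum_{n=0}^\infty\alpha_n^2\gamma_n^{2r}<\infty$. Then there exists a real number $s\in(0,1)$ such that $\sum_{n=0}^\infty\alpha_n^{1+s}\gamma_n^r<\infty$. *)

theory Defs
  imports "HOL-Analysis.Analysis"
begin

end

theory Submission
  imports Defs
begin

text \<open>
  Writing \<open>\<gamma>\<^sub>n\<close> for the partial sums, the telescoping bound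
  \<open>\<alpha>\<^sub>n / \<gamma>\<^sub>n\<^sup>2 \<le> C (1/\<gamma>\<^sub>n - 1/\<gamma>\<^sub>n\<^sub>+\<^sub>1)\<close> shows that
  \<open>\<Sum> \<alpha>\<^sub>n / \<gamma>\<^sub>n\<^sup>2\<close> converges. The term \<open>\<alpha>\<^sub>n\<^sup>1\<^sup>+\<^sup>s \<gamma>\<^sub>n\<^sup>r\<close> is the geometric
  interpolation \<open>(\<alpha>\<^sub>n\<^sup>2 \<gamma>\<^sub>n\<^sup>2\<^sup>r)\<^sup>s (\<alpha>\<^sub>n / \<gamma>\<^sub>n\<^sup>2)\<^sup>1\<^sup>-\<^sup>s\<close> with
  \<open>s = (r + 2) / (2r + 2)\<close>, so by Young's inequality it is dominated by a
  convex combination of two summable sequences.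
\<close>

lemma summable_powr_interpolation:
  fixes x y :: "nat \<Rightarrow> real" and t :: real
  assumes "\<And>n. 0 \<le> x n" "\<And>n. 0 \<le> y n" "summable x" "summable y"
    and "0 \<le> t" "t \<le> 1"
  shows "summable (\<lambda>n. x n powr t * y n powr (1 - t))"
proof (rule summable_comparison_test)
  show "summable (\<lambda>n. t * x n + (1 - t) * y n)"
    using assms by (intro summable_add summable_mult)
  have "x n powr t * y n powr (1 - t) \<le> t * x n + (1 - t) * y n" for n
  proof (cases "x n = 0 \<or> y n = 0")
    case True
    then show ?thesis using assms by auto
  next
    case False
    then show ?thesis using assms Youngs_inequality_0[of t "1 - t" "x n" "y n"]
      by (simp add: order_less_le)
  qed
  then show "\<exists>N. \<forall>n\<ge>N. norm (x n powr t * y n powr (1 - t)) \<le> t * x n + (1 - t) * y n"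
    by auto
qed

lemma summable_div_partial_sum_squared:
  fixes \<alpha> :: "nat \<Rightarrow> real" and M :: real
  assumes nonneg: "\<And>n. 0 \<le> \<alpha> n" and bounded: "\<And>n. \<alpha> n \<le> M"
  shows "summable (\<lambda>n. \<alpha> n / (1 + (\<Sum>i<n. \<alpha> i))\<^sup>2)"
proof -
  define \<gamma> where "\<gamma> n = 1 + (\<Sum>i<n. \<alpha> i)" for n
  have \<gamma>_ge_1: "1 \<le> \<gamma> n" for n
    using nonneg by (simp add: \<gamma>_def sum_nonneg)
  have \<gamma>_Suc: "\<gamma> (Suc n) = \<gamma> n + \<alpha> n" for n
    by (simp add: \<gamma>_def)
  have "decseq (\<lambda>n. 1 / \<gamma> n)"
  proof (rule decseq_SucI)
    show "1 / \<gamma> (Suc n) \<le> 1 / \<gamma> n" for n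
      using \<gamma>_ge_1[of n] nonneg[of n] by (simp add: \<gamma>_Suc frac_le)
  qed
  then obtain L where "(\<lambda>n. 1 / \<gamma> n) \<longlonglongrightarrow> L"
    using decseq_convergent[of _ 0] \<gamma>_ge_1 by (meson less_le_trans zero_less_divide_1_iff zero_less_one less_imp_le)
  then have telescope: "summable (\<lambda>n. (1 + M) * (1 / \<gamma> n - 1 / \<gamma> (Suc n)))"
    by (intro summable_mult telescope_summable')
  have "\<alpha> n / (\<gamma> n)\<^sup>2 \<le> (1 + M) * (1 / \<gamma> n - 1 / \<gamma> (Suc n))" for n
  proof -
    have "\<gamma> (Suc n) \<le> (1 + M) * \<gamma> n"
    proof -
      have "M \<le> M * \<gamma> n"
        using order_trans[OF nonneg bounded] \<gamma>_ge_1 by (simp add: mult_le_cancel_left1)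
      then show ?thesis
        using bounded[of n] by (simp add: \<gamma>_Suc algebra_simps)
    qed
    then have "\<alpha> n / (\<gamma> n)\<^sup>2 \<le> (1 + M) * \<alpha> n / (\<gamma> n * \<gamma> (Suc n))"
      using \<gamma>_ge_1[of n] \<gamma>_ge_1[of "Suc n"] nonneg[of n]
      by (simp add: power2_eq_square divide_simps mult_left_mono mult.assoc mult.left_commute)
    also have "\<dots> = (1 + M) * (1 / \<gamma> n - 1 / \<gamma> (Suc n))"
      using \<gamma>_ge_1[of n] \<gamma>_ge_1[of "Suc n"] by (simp add: \<gamma>_Suc field_simps)
    finally show ?thesis .
  qed
  then show ?thesis
    unfolding \<gamma>_def[symmetric] using nonneg
    by (intro summable_comparison_test[OF _ telescope]) auto
qed

lemma powr_interpolation_identity: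
  fixes a g s r :: real
  assumes "0 < a" "0 < g"
  shows "(a\<^sup>2 * g powr (2 * r)) powr s * (a / g\<^sup>2) powr (1 - s)
       = a powr (1 + s) * g powr (2 * r * s - 2 * (1 - s))"
  using assms by (simp add: powr_def ln_mult ln_div ln_realpow flip: exp_add)
    (simp add: algebra_simps)

theorem lemma2p2:
  fixes \<alpha> :: "nat \<Rightarrow> real" and \<gamma> :: "nat \<Rightarrow> real" and r :: real
  assumes pos: "\<And>n. \<alpha> n > 0"
    and gamma_def: "\<And>n. \<gamma> n = 1 + (\<Sum>i<n. \<alpha> i)"
    and lim: "\<alpha> \<longlonglongrightarrow> 0"
    and lsup: "limsup (\<lambda>n. ereal \<bar>1 / \<alpha> (Suc n) - 1 / \<alpha> n\<bar>) < \<infinity>"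
    and div: "\<not> summable \<alpha>"
    and r: "r > 1" and "summable (\<lambda>n. (\<alpha> n)\<^sup>2 * \<gamma> n powr (2 * r))"
  shows "\<exists>s::real. 0 < s \<and> s < 1 \<and> summable (\<lambda>n. \<alpha> n powr (1 + s) * \<gamma> n powr r)"
proof -
  define s where "s = (r + 2) / (2 * r + 2)"
  have s: "0 < s" "s < 1"
    using r by (auto simp: s_def field_simps)
  have "s * (2 * r + 2) = r + 2"
    using r by (simp add: s_def)
  then have exponent: "2 * r * s - 2 * (1 - s) = r"
    by (simp add: algebra_simps)
  obtain M where M: "\<And>n. \<alpha> n \<le> M"
    using convergent_imp_Bseq[OF convergentI[OF lim]] by (auto simp: Bseq_def dest: abs_le_D1)
  have \<gamma>_pos: "\<gamma> n > 0" for n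
    using pos by (simp add: gamma_def add_pos_nonneg sum_nonneg less_imp_le)
  have "summable (\<lambda>n. \<alpha> n / (\<gamma> n)\<^sup>2)"
    unfolding gamma_def
    using pos M by (intro summable_div_partial_sum_squared) (auto intro: less_imp_le)
  then have "summable (\<lambda>n. ((\<alpha> n)\<^sup>2 * \<gamma> n powr (2 * r)) powr s * (\<alpha> n / (\<gamma> n)\<^sup>2) powr (1 - s))"
    using assms(7) pos \<gamma>_pos s by (intro summable_powr_interpolation) (auto simp: less_imp_le)
  then have "summable (\<lambda>n. \<alpha> n powr (1 + s) * \<gamma> n powr r)"
    by (simp only: powr_interpolation_identity pos \<gamma>_pos exponent)
  then show ?thesis
    using s by blast
qed

end
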